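(* For an integer $n\ge 3$, let $P_n$ be the prism graph of order $2n$. Then $$\phi_{\mathbb{C}}(P_n) = \begin{cases} 2 & \text{if } n \text{ is even},\\ 1 + 2\sin\left(\frac{\pi}{6}\cdot\frac{n}{n-1}\right) & \text{if } n \equiv 1 \text{ or } 3 \pmod 6,\\ 1 + 2\sin\left(\frac{\pi}{6}\cdot\frac{n+1}{n}\right) & \text{if } n \equiv 5 \pmod 6.\end{cases}$$
   Context: The prism graph $P_n$ ($n \ge 3$) is the Cartesian product of a cycle of length $n$ with $K_2$: two disjoint $n$-cycles $a_0\cdots a_{n-1}$ and $b_0\cdots b_{n-1}$ together with the edges $a_jb_j$ for all $j$. For a real number $r \geq 2$, a complex nowhere-zero $r$-flow on a graph $G$ is an orientation of $G$ together with a map $\varphi\colon E(G)\to\mathbb{C}$ such that $1 \le |\varphi(e)| \le r-1$ for every edge $e$ and, at every vertex, the sum of the values on incoming edges equals the sum of the values on outgoing edges. For a bridgeless graph $G$, the complex flow number $\phi_{\mathbb{C}}(G)$ is the minimum (equivalently infimum; it is attained) of the real numbers $r\ge 2$ such that $G$ admits a complex nowhere-zero $r$-flow. *)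

theory Defs
  imports Complex_Main
begin

text \<open>A finite simple graph is given by a vertex set V and a set E of 2-element
subsets of V.\<close>

definition orientation :: "'a set set \<Rightarrow> ('a \<times> 'a) set \<Rightarrow> bool" where
  "orientation E D \<longleftrightarrow>
     (\<forall>a\<in>D. {fst a, snd a} \<in> E) \<and> (\<forall>e\<in>E. \<exists>!a. a \<in> D \<and> {fst a, snd a} = e)"

definition complex_nz_flow :: "'a set \<Rightarrow> 'a set set \<Rightarrow> real \<Rightarrow> bool" where
  "complex_nz_flow V E r \<longleftrightarrow>
     (\<exists>D (\<phi> :: 'a \<times> 'a \<Rightarrow> complex).
        orientation E D \<and>
        (\<forall>a\<in>D. 1 \<le> cmod (\<phi> a) \<and> cmod (\<phi> a) \<le> r - 1) \<and>
        (\<forall>v\<in>V. (\<Sum>a\<in>{a\<in>D. snd a = v}. \<phi> a) = (\<Sum>a\<in>{a\<in>D. fst a = v}. \<phi> a)))"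

definition complex_flow_number :: "'a set \<Rightarrow> 'a set set \<Rightarrow> real" where
  "complex_flow_number V E = Inf {r. r \<ge> 2 \<and> complex_nz_flow V E r}"

text \<open>Prism graph P_n: vertices (False, j) = a_j and (True, j) = b_j for j < n.\<close>

definition prism_vertices :: "nat \<Rightarrow> (bool \<times> nat) set" where
  "prism_vertices n = UNIV \<times> {..<n}"

definition prism_edges :: "nat \<Rightarrow> (bool \<times> nat) set set" where
  "prism_edges n =
     {{(b, j), (b, (j + 1) mod n)} | b j. j < n} \<union> {{(False, j), (True, j)} | j. j < n}"

end

theory Submission
  imports Defs "HOL-Analysis.Complex_Transcendental"
begin

(* Kirchhoff's law at a_j and b_j shows that a complex flow on P_n is determined by its values x_j
   on the rim arcs a_j a_(j+1): the spoke at a_(j+1) carries x_j - x_(j+1). Conversely, x_j on one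
   rim, -x_j on the other and x_(j-1) - x_j on the spokes is a flow. Hence phi_C(P_n) - 1 is the
   least R admitting a closed polygon x_0, ..., x_(n-1) whose vertices and sides all have length in
   [1, R]. For even n, the polygon alternating between 1 and e^(i pi/3) gives R = 1. For odd n, the
   law of cosines confines each turning angle Arg (x_(j+1) / x_j) to an interval determined by
   |x_j|, |x_(j+1)| and R; the turning angles add up to a multiple of 2 pi, and as n is odd they
   cannot all be close to +-pi/3, which forces R to be at least the stated value. Regular star
   polygons (with one vertex moved when n = 3 mod 6) attain it. *)

section \<open>Trigonometric inequalities\<close>

lemma trig_special_values:
  "cos (pi/3) = 1/2" "sin (pi/3) = sqrt 3/2" "cos (pi/6) = sqrt 3/2" "sin (pi/6) = 1/2"
  "cos (2 * pi/3) = -1/2" "sin (2 * pi/3) = sqrt 3/2"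
proof -
  show "cos (pi/3) = 1/2" "sin (pi/3) = sqrt 3/2" "cos (pi/6) = sqrt 3/2" "sin (pi/6) = 1/2"
    by (simp_all add: cos_60 sin_60 cos_30 sin_30)
  have e: "2 * pi/3 = pi - pi/3" by simp
  show "cos (2 * pi/3) = -1/2" "sin (2 * pi/3) = sqrt 3/2"
    unfolding e cos_diff sin_diff by (simp_all add: cos_60 sin_60)
qed

lemma cos_form_minus_pi_third_factorization:
  fixes u v :: real
  shows "1 - (4 * cos u^2 + 4 * cos v^2 - 8 * cos u * cos v * cos (u + v - pi/3))
       = 4 * sin (u + v - pi/6) * (cos (u - v) - cos (2 * pi/3 - u - v))"
proof -
  have "sqrt 3 ^ 2 = 3" by simp
  then show ?thesis
    apply (simp add: cos_diff sin_diff cos_add sin_add trig_special_values)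
    using sin_cos_squared_add[of u] sin_cos_squared_add[of v] \<open>sqrt 3 ^ 2 = 3\<close> by algebra
qed

lemma cos_form_sum_of_squares:
  fixes u v h :: real
  shows "4 * cos u^2 + 4 * cos v^2 - 8 * cos u * cos v * cos (u + v + 2 * h)
       = (2 * sin h + sin (2 * u + h) + sin (2 * v + h))^2 + (cos (2 * v + h) - cos (2 * u + h))^2"
  apply (simp add: cos_diff sin_diff cos_add sin_add sin_double cos_double)
  using sin_cos_squared_add[of u] sin_cos_squared_add[of v] sin_cos_squared_add[of h]
  by algebra

lemma sin_le_sin_between:
  fixes a t :: real
  assumes "0 \<le> a" "a \<le> pi/2" "a \<le> t" "t \<le> pi - a"
  shows "sin a \<le> sin t"
proof (cases "t \<le> pi/2")
  case True
  then show ?thesis using assms by (intro sin_monotone_2pi_le) auto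
next
  case False
  have "sin a \<le> sin (pi - t)" using assms False by (intro sin_monotone_2pi_le) auto
  then show ?thesis by simp
qed

lemma cos_form_minus_pi_third_le_1:
  fixes u v :: real
  assumes "0 \<le> u" "u \<le> pi/3" "0 \<le> v" "v \<le> pi/3" "pi/3 \<le> u + v"
  shows "4 * cos u^2 + 4 * cos v^2 - 8 * cos u * cos v * cos (u + v - pi/3) \<le> 1"
proof -
  have "0 \<le> sin (u + v - pi/6)" using assms by (intro sin_ge_zero) auto
  moreover have "cos (2 * pi/3 - u - v) \<le> cos \<bar>u - v\<bar>"
    using assms by (intro cos_monotone_0_pi_le) auto
  ultimately have "0 \<le> 4 * sin (u + v - pi/6) * (cos (u - v) - cos (2 * pi/3 - u - v))"
    by simp
  then show ?thesis using cos_form_minus_pi_third_factorization[of u v] by linarith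
qed

lemma cos_sq_le_cos_form:
  fixes u v w :: real
  assumes "0 \<le> w" "w \<le> u" "u \<le> pi/3" "w \<le> v" "v \<le> pi/3"
  shows "4 * cos w^2 \<le> 4 * cos u^2 + 4 * cos v^2 - 8 * cos u * cos v * cos (u + v + pi/3 - 2 * w)"
proof -
  define h where "h = pi/6 - w"
  have e: "u + v + pi/3 - 2 * w = u + v + 2 * h" by (simp add: h_def)
  have "sin (pi/6 + w) \<le> sin (2 * u + h)" "sin (pi/6 + w) \<le> sin (2 * v + h)"
    using assms by (intro sin_le_sin_between; simp add: h_def)+
  moreover have "2 * sin h + 2 * sin (pi/6 + w) = 2 * cos w"
    by (simp add: h_def sin_diff sin_add trig_special_values)
  ultimately have "2 * cos w \<le> 2 * sin h + sin (2 * u + h) + sin (2 * v + h)" by linarith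
  moreover have "0 \<le> cos w" using assms by (intro cos_ge_zero) auto
  ultimately have "(2 * cos w)^2 \<le> (2 * sin h + sin (2 * u + h) + sin (2 * v + h))^2"
    by (intro power_mono) auto
  also have "\<dots> \<le> 4 * cos u^2 + 4 * cos v^2 - 8 * cos u * cos v * cos (u + v + pi/3 - 2 * w)"
    unfolding e cos_form_sum_of_squares by simp
  finally show ?thesis by (simp add: power_mult_distrib)
qed

lemma law_of_cosines_Arg:
  fixes P Q :: complex
  assumes "P \<noteq> 0" "Q \<noteq> 0"
  shows "cmod (Q - P)^2 = cmod P^2 + cmod Q^2 - 2 * cmod P * cmod Q * cos (Arg (Q / P))"
proof -
  have "cmod P * cmod Q * cos (Arg (Q / P)) = cmod P * cmod Q * (Re (Q / P) / cmod (Q / P))"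
    using assms by (simp add: cos_Arg)
  also have "\<dots> = Re Q * Re P + Im Q * Im P"
  proof -
    have "Re (Q / P) = (Re Q * Re P + Im Q * Im P) / cmod P^2" by (simp add: Re_divide cmod_power2)
    then show ?thesis using assms by (simp add: norm_divide field_simps power2_eq_square)
  qed
  finally show ?thesis
    unfolding cmod_power2 by (simp add: power2_eq_square algebra_simps)
qed

lemma arccos_half_bounds:
  fixes r :: real
  assumes "1 \<le> r" "r \<le> 2"
  shows "cos (arccos (r/2)) = r/2" "0 \<le> arccos (r/2)" "arccos (r/2) \<le> pi/3"
proof -
  show "cos (arccos (r/2)) = r/2" "0 \<le> arccos (r/2)"
    using assms by (auto intro: arccos_lbound)
  have "arccos (r/2) \<le> arccos (1/2)" using assms by (intro arccos_le_arccos) auto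
  then show "arccos (r/2) \<le> pi/3" by simp
qed

section \<open>Angle bounds from the law of cosines\<close>

lemma triangle_angle_ge_arccos_sum:
  fixes \<rho> \<sigma> \<zeta> a :: real
  assumes r: "1 \<le> \<rho>" "\<rho> \<le> 2" "1 \<le> \<sigma>" "\<sigma> \<le> 2" and z: "1 \<le> \<zeta>"
    and law: "\<zeta>^2 = \<rho>^2 + \<sigma>^2 - 2 * \<rho> * \<sigma> * cos a" and a: "0 \<le> a" "a \<le> pi"
  shows "arccos (\<rho>/2) + arccos (\<sigma>/2) - pi/3 \<le> a"
proof (rule ccontr)
  define u where "u = arccos (\<rho>/2)"
  define v where "v = arccos (\<sigma>/2)"
  note U = arccos_half_bounds[OF r(1,2), folded u_def]
  note V = arccos_half_bounds[OF r(3,4), folded v_def]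
  assume "\<not> ?thesis"
  then have lt: "a < u + v - pi/3" by (simp add: u_def v_def)
  have "cos (u + v - pi/3) < cos a"
    using lt a U V by (intro cos_monotone_0_pi) auto
  then have "2 * \<rho> * \<sigma> * cos (u + v - pi/3) < 2 * \<rho> * \<sigma> * cos a" using r by simp
  then have "\<zeta>^2 < \<rho>^2 + \<sigma>^2 - 2 * \<rho> * \<sigma> * cos (u + v - pi/3)" using law by linarith
  also have "\<dots> = 4 * cos u^2 + 4 * cos v^2 - 8 * cos u * cos v * cos (u + v - pi/3)"
  proof -
    have "\<rho> = 2 * cos u" "\<sigma> = 2 * cos v" using U(1) V(1) r by auto
    then show ?thesis by (simp add: power2_eq_square)
  qed
  also have "\<dots> \<le> 1" using U V lt a by (intro cos_form_minus_pi_third_le_1) auto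
  finally show False using one_le_power[OF z, of 2] by simp
qed

lemma triangle_angle_le_arccos_sum:
  fixes \<rho> \<sigma> \<zeta> a R :: real
  assumes r: "1 \<le> \<rho>" "\<rho> \<le> R" "1 \<le> \<sigma>" "\<sigma> \<le> R" "R \<le> 2" and z: "0 \<le> \<zeta>" "\<zeta> \<le> R"
    and law: "\<zeta>^2 = \<rho>^2 + \<sigma>^2 - 2 * \<rho> * \<sigma> * cos a" and a: "0 \<le> a" "a \<le> pi"
  shows "a \<le> arccos (\<rho>/2) + arccos (\<sigma>/2) + pi/3 - 2 * arccos (R/2)"
proof (rule ccontr)
  define u where "u = arccos (\<rho>/2)"
  define v where "v = arccos (\<sigma>/2)"
  define w where "w = arccos (R/2)"
  note U = arccos_half_bounds[of \<rho>, folded u_def]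
  note V = arccos_half_bounds[of \<sigma>, folded v_def]
  note W = arccos_half_bounds[of R, folded w_def]
  have wu: "w \<le> u" "w \<le> v" unfolding u_def v_def w_def using r by (auto intro: arccos_le_arccos)
  assume "\<not> ?thesis"
  then have lt: "u + v + pi/3 - 2 * w < a" by (simp add: u_def v_def w_def)
  have "cos a < cos (u + v + pi/3 - 2 * w)"
    using lt a U V W r wu by (intro cos_monotone_0_pi) auto
  then have "2 * \<rho> * \<sigma> * cos a < 2 * \<rho> * \<sigma> * cos (u + v + pi/3 - 2 * w)" using r by simp
  then have "\<rho>^2 + \<sigma>^2 - 2 * \<rho> * \<sigma> * cos (u + v + pi/3 - 2 * w) < \<zeta>^2" using law by linarith
  moreover have "R^2 \<le> \<rho>^2 + \<sigma>^2 - 2 * \<rho> * \<sigma> * cos (u + v + pi/3 - 2 * w)"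
    using cos_sq_le_cos_form[of w u v] U V W r wu by (auto simp: power2_eq_square)
  moreover have "\<zeta>^2 \<le> R^2" using z by (intro power_mono) auto
  ultimately show False by simp
qed

text \<open>The lower bound below only needs \<open>cos a \<le> 1 - 1/(2 R\<^sup>2)\<close>: clearing denominators,
  it reduces to \<open>R\<^sup>2 (\<rho> - \<sigma>)\<^sup>2 + \<rho> \<sigma> \<le> R\<^sup>2\<close>, which holds for \<open>1 \<le> \<rho>, \<sigma> \<le> R\<close> as soon as \<open>R\<^sup>2 \<le> 2\<close>.\<close>

lemma sq_diff_bound:
  fixes p q R :: real
  assumes "1 \<le> p" "p \<le> q" "q \<le> R" "R^2 \<le> 2"
  shows "R^2 * (q - p)^2 + p * q \<le> R^2"
proof -
  have R1: "1 \<le> R" using assms by simp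
  have "(q - p)^2 \<le> (R - p)^2" using assms by (intro power_mono) auto
  then have 1: "R^2 * (q - p)^2 \<le> R^2 * (R - p)^2" by (intro mult_left_mono) auto
  have 2: "p * q \<le> p * R" using assms by (intro mult_left_mono) auto
  have "R * (R - p) \<le> R * (R - 1)" using assms R1 by (intro mult_left_mono) auto
  also have "\<dots> \<le> 1" using assms R1 by (simp add: power2_eq_square algebra_simps)
  finally have "(R - p) * (R * (R - p)) \<le> (R - p) * 1" using assms by (intro mult_left_mono) auto
  then have "R * (R - p)^2 + p \<le> R" by (simp add: power2_eq_square algebra_simps)
  then have "R * (R * (R - p)^2 + p) \<le> R * R" using R1 by (intro mult_left_mono) auto
  then show ?thesis using 1 2 by (simp add: power2_eq_square algebra_simps)
qed

lemma triangle_angle_ge_arccos_inv_sq: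
  fixes \<rho> \<sigma> \<zeta> a R :: real
  assumes r: "1 \<le> \<rho>" "\<rho> \<le> R" "1 \<le> \<sigma>" "\<sigma> \<le> R" "R^2 \<le> 2" and z: "1 \<le> \<zeta>"
    and law: "\<zeta>^2 = \<rho>^2 + \<sigma>^2 - 2 * \<rho> * \<sigma> * cos a" and a: "0 \<le> a" "a \<le> pi"
  shows "arccos (1 - 1/(2 * R^2)) \<le> a"
proof -
  have R1: "1 \<le> R" using r by simp
  have k: "R^2 * (\<rho> - \<sigma>)^2 + \<rho> * \<sigma> \<le> R^2"
    using sq_diff_bound[of \<rho> \<sigma> R] sq_diff_bound[of \<sigma> \<rho> R] r
    by (cases "\<rho> \<le> \<sigma>") (auto simp: power2_commute mult.commute)
  have "R^2 * (2 * \<rho> * \<sigma> * cos a) \<le> R^2 * (\<rho>^2 + \<sigma>^2 - 1)"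
    using law z one_le_power[of \<zeta> 2] by (intro mult_left_mono) auto
  also have "\<dots> \<le> 2 * \<rho> * \<sigma> * R^2 - \<rho> * \<sigma>" using k by (simp add: power2_eq_square algebra_simps)
  finally have "(\<rho> * \<sigma>) * (2 * R^2 * cos a) \<le> (\<rho> * \<sigma>) * (2 * R^2 - 1)"
    by (simp add: algebra_simps)
  then have "2 * R^2 * cos a \<le> 2 * R^2 - 1" using r by (simp add: mult_le_cancel_left_pos)
  then have "cos a \<le> 1 - 1/(2 * R^2)" using R1 by (simp add: field_simps)
  then have "arccos (1 - 1/(2 * R^2)) \<le> arccos (cos a)"
    using R1 by (intro arccos_le_arccos) auto
  then show ?thesis using a by (simp add: arccos_cos)
qed

lemma le_2_of_sq_le_2:
  fixes R :: real
  assumes "R^2 \<le> 2"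
  shows "R \<le> 2"
proof (rule ccontr)
  assume "\<not> R \<le> 2"
  then have "2 * 2 \<le> R * R" by (intro mult_mono) auto
  then show False using assms by (simp add: power2_eq_square)
qed

lemma chord_angle_bounds:
  fixes P Q :: complex and R :: real
  assumes P: "1 \<le> cmod P" "cmod P \<le> R" and Q: "1 \<le> cmod Q" "cmod Q \<le> R"
    and PQ: "1 \<le> cmod (Q - P)" "cmod (Q - P) \<le> R" and R: "R^2 \<le> 2"
  defines "a \<equiv> \<bar>Arg (Q / P)\<bar>"
  shows "arccos (cmod P / 2) + arccos (cmod Q / 2) - pi/3 \<le> a"
    and "a \<le> arccos (cmod P / 2) + arccos (cmod Q / 2) + pi/3 - 2 * arccos (R/2)"
    and "arccos (1 - 1/(2 * R^2)) \<le> a"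
proof -
  have R2: "R \<le> 2" using R by (rule le_2_of_sq_le_2)
  have "P \<noteq> 0" "Q \<noteq> 0" using P Q by auto
  then have law: "cmod (Q - P)^2 = cmod P^2 + cmod Q^2 - 2 * cmod P * cmod Q * cos a"
    by (simp add: law_of_cosines_Arg a_def)
  have a: "0 \<le> a" "a \<le> pi" using Arg_bounded[of "Q / P"] by (auto simp: a_def)
  show "arccos (cmod P / 2) + arccos (cmod Q / 2) - pi/3 \<le> a"
    using P Q R2 by (intro triangle_angle_ge_arccos_sum[OF _ _ _ _ PQ(1) law a]) auto
  show "a \<le> arccos (cmod P / 2) + arccos (cmod Q / 2) + pi/3 - 2 * arccos (R/2)"
    using P Q R2 PQ by (intro triangle_angle_le_arccos_sum[OF _ _ _ _ _ _ _ law a]) auto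
  show "arccos (1 - 1/(2 * R^2)) \<le> a"
    using P Q R PQ by (intro triangle_angle_ge_arccos_inv_sq[OF _ _ _ _ _ _ law a]) auto
qed

section \<open>Turning angles of a closed polygon\<close>

lemma sum_Suc_mod:
  fixes f :: "nat \<Rightarrow> 'a::comm_monoid_add"
  assumes "0 < n"
  shows "(\<Sum>j<n. f (Suc j mod n)) = (\<Sum>j<n. f j)"
proof -
  obtain m where m: "n = Suc m" using assms by (cases n) auto
  have "(\<Sum>j<Suc m. f (Suc j mod Suc m)) = (\<Sum>j<m. f (Suc j)) + f 0"
    by simp
  also have "\<dots> = (\<Sum>j<Suc m. f j)"
    by (subst sum.lessThan_Suc_shift) (simp add: add.commute)
  finally show ?thesis using m by simp
qed

lemma prod_Suc_mod:
  fixes f :: "nat \<Rightarrow> 'a::comm_monoid_mult"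
  assumes "0 < n"
  shows "(\<Prod>j<n. f (Suc j mod n)) = (\<Prod>j<n. f j)"
proof -
  obtain m where m: "n = Suc m" using assms by (cases n) auto
  have "(\<Prod>j<Suc m. f (Suc j mod Suc m)) = (\<Prod>j<m. f (Suc j)) * f 0"
    by simp
  also have "\<dots> = (\<Prod>j<Suc m. f j)"
    by (subst prod.lessThan_Suc_shift) (simp add: mult.commute)
  finally show ?thesis using m by simp
qed

lemma cis_sum:
  fixes n :: nat
  shows "cis (\<Sum>j<n. f j) = (\<Prod>j<n. cis (f j))"
  by (induction n) (simp_all add: cis_mult[symmetric])

lemma sgn_prod_lessThan:
  fixes n :: nat
  shows "sgn (\<Prod>j<n. (f j :: complex)) = (\<Prod>j<n. sgn (f j))"
  by (induction n) (simp_all add: sgn_mult)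

lemma sum_Arg_cyclic_ratios:
  fixes x :: "nat \<Rightarrow> complex"
  assumes n: "0 < n" and x: "\<forall>j<n. x j \<noteq> 0"
  obtains k :: int where "(\<Sum>j<n. Arg (x (Suc j mod n) / x j)) = 2 * pi * k"
proof -
  have "cis (\<Sum>j<n. Arg (x (Suc j mod n) / x j)) = (\<Prod>j<n. sgn (x (Suc j mod n) / x j))"
    unfolding cis_sum
  proof (intro prod.cong refl)
    fix j assume "j \<in> {..<n}"
    then have "x (Suc j mod n) / x j \<noteq> 0" using n x by simp
    then show "cis (Arg (x (Suc j mod n) / x j)) = sgn (x (Suc j mod n) / x j)" by (rule cis_Arg)
  qed
  also have "\<dots> = sgn ((\<Prod>j<n. x (Suc j mod n)) / (\<Prod>j<n. x j))"
    by (simp add: sgn_prod_lessThan prod_dividef)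
  also have "\<dots> = 1"
    using prod_Suc_mod[OF n, of x] x by (simp add: prod_zero_iff)
  finally have "cos (\<Sum>j<n. Arg (x (Suc j mod n) / x j)) = 1"
    by (simp add: complex_eq_iff)
  then obtain k :: int where "(\<Sum>j<n. Arg (x (Suc j mod n) / x j)) = k * 2 * pi"
    by (auto simp: cos_one_2pi_int)
  then show ?thesis by (intro that[of k]) simp
qed

lemma cyclic_switch_exists:
  assumes "0 < n" "\<exists>j<n. s j" "\<exists>j<n. \<not> s j"
  obtains j where "j < n" "\<not> s j" "s (Suc j mod n)"
proof (rule ccontr)
  assume H: "\<not> thesis"
  obtain i where i: "i < n" "\<not> s i" using assms by auto
  have all: "\<not> s ((i + d) mod n)" for d
  proof (induction d)
    case 0 then show ?case using i by simp
  next
    case (Suc d)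
    have "(i + Suc d) mod n = Suc ((i + d) mod n) mod n" by (simp add: mod_Suc_eq)
    moreover have "(i + d) mod n < n" using assms by simp
    ultimately show ?case using H Suc that by auto
  qed
  obtain j where j: "j < n" "s j" using assms by auto
  have "(i + (j + n - i)) mod n = j" using i j by simp
  then show False using all[of "j + n - i"] j by simp
qed

text \<open>Regrouped by \<open>\<mu> (Suc j mod n)\<close>, every summand contributes at most \<open>\<delta>\<close>, and nothing at a
  switch from \<open>\<not> s j\<close> to \<open>s (Suc j mod n)\<close>, of which there is at least one.\<close>

lemma cyclic_switch_sum_le:
  fixes \<mu> :: "nat \<Rightarrow> real" and s :: "nat \<Rightarrow> bool"
  assumes n: "0 < n" and mu: "\<forall>j<n. 0 \<le> \<mu> j \<and> \<mu> j \<le> \<delta>/2"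
    and ex: "\<exists>j<n. s j" "\<exists>j<n. \<not> s j"
  shows "(\<Sum>j<n. if s j then \<delta> - \<mu> j - \<mu> (Suc j mod n) else \<mu> j + \<mu> (Suc j mod n))
          \<le> (real n - 1) * \<delta>"
proof -
  define \<tau> where "\<tau> j = (if s j then -1 else (1::real))" for j
  define t where "t j = (if \<not> s j \<and> s (Suc j mod n) then \<delta> else 0)" for j
  have d0: "0 \<le> \<delta>" using mu n by force
  have "(\<Sum>j<n. if s j then \<delta> - \<mu> j - \<mu> (Suc j mod n) else \<mu> j + \<mu> (Suc j mod n))
      = (\<Sum>j<n. (if s j then \<delta> else 0) + \<tau> j * \<mu> (Suc j mod n)) + (\<Sum>j<n. \<tau> j * \<mu> j)"
    by (simp add: sum.distrib[symmetric]) (intro sum.cong, auto simp: \<tau>_def)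
  also have "(\<Sum>j<n. \<tau> j * \<mu> j) = (\<Sum>j<n. \<tau> (Suc j mod n) * \<mu> (Suc j mod n))"
    using sum_Suc_mod[OF n, of "\<lambda>j. \<tau> j * \<mu> j"] by simp
  also have "(\<Sum>j<n. (if s j then \<delta> else 0) + \<tau> j * \<mu> (Suc j mod n)) + \<dots>
      = (\<Sum>j<n. (if s j then \<delta> else 0) + (\<tau> j + \<tau> (Suc j mod n)) * \<mu> (Suc j mod n))"
    by (simp add: sum.distrib[symmetric] algebra_simps)
  also have "\<dots> \<le> (\<Sum>j<n. \<delta> - t j)"
  proof (rule sum_mono)
    fix j assume "j \<in> {..<n}"
    then have "Suc j mod n < n" using n by simp
    then have "0 \<le> \<mu> (Suc j mod n)" "\<mu> (Suc j mod n) \<le> \<delta>/2" using mu by auto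
    then show "(if s j then \<delta> else 0) + (\<tau> j + \<tau> (Suc j mod n)) * \<mu> (Suc j mod n) \<le> \<delta> - t j"
      using d0 by (auto simp: \<tau>_def t_def)
  qed
  also have "\<dots> = real n * \<delta> - (\<Sum>j<n. t j)" by (simp add: sum_subtractf)
  also have "\<dots> \<le> real n * \<delta> - \<delta>"
  proof -
    obtain j0 where j0: "j0 < n" "\<not> s j0" "s (Suc j0 mod n)"
      using cyclic_switch_exists[OF n ex] by blast
    then have "t j0 \<le> (\<Sum>j<n. t j)"
      using d0 by (intro member_le_sum) (auto simp: t_def)
    moreover have "t j0 = \<delta>" using j0 by (simp add: t_def)
    ultimately show ?thesis by simp
  qed
  finally show ?thesis by (simp add: algebra_simps)
qed

lemma mixed_sign_deviation_le:
  fixes \<mu> a :: "nat \<Rightarrow> real" and s :: "nat \<Rightarrow> bool"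
  assumes n: "0 < n" and mu: "\<forall>j<n. 0 \<le> \<mu> j \<and> \<mu> j \<le> \<delta>/2"
    and up: "\<forall>j<n. a j \<le> pi/3 + \<delta> - \<mu> j - \<mu> (Suc j mod n)"
    and lo: "\<forall>j<n. pi/3 - \<mu> j - \<mu> (Suc j mod n) \<le> a j"
    and ex: "\<exists>j<n. s j" "\<exists>j<n. \<not> s j"
  shows "(\<Sum>j<n. if s j then a j - pi/3 else pi/3 - a j) \<le> (real n - 1) * \<delta>"
proof -
  have "(\<Sum>j<n. if s j then a j - pi/3 else pi/3 - a j)
      \<le> (\<Sum>j<n. if s j then \<delta> - \<mu> j - \<mu> (Suc j mod n) else \<mu> j + \<mu> (Suc j mod n))"
    using up lo by (intro sum_mono) fastforce
  also have "\<dots> \<le> (real n - 1) * \<delta>" by (rule cyclic_switch_sum_le[OF n mu ex])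
  finally show ?thesis .
qed

lemma sum_if_pm_one:
  fixes s :: "nat \<Rightarrow> bool"
  shows "(\<Sum>j<n. if s j then 1 else -1::real) = 2 * real (card {j\<in>{..<n}. s j}) - real n"
proof -
  have "(\<Sum>j<n. if s j then 1 else -1::real) = (\<Sum>j<n. 2 * (if s j then 1 else 0) - 1)"
    by (intro sum.cong) auto
  also have "\<dots> = 2 * (\<Sum>j<n. if s j then 1 else 0::real) - real n"
    by (simp add: sum_subtractf sum_distrib_left)
  also have "(\<Sum>j<n. if s j then 1 else 0::real) = real (card {j\<in>{..<n}. s j})"
    by (simp add: sum.If_cases Int_def)
  finally show ?thesis .
qed

text \<open>Writing \<open>\<Sum> g = 2\<pi>k\<close> as \<open>\<pi>/3\<close> times \<open>6k\<close>, parity forces the deviation of the sum from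
  \<open>\<plusminus>\<pi>/3\<close> per term to be an odd multiple of \<open>\<pi>/3\<close>, hence at least \<open>\<pi>/3\<close> in absolute value.\<close>

lemma odd_angle_sum_mixed_signs:
  fixes \<mu> g :: "nat \<Rightarrow> real" and k :: int
  assumes odd: "odd n" and mu: "\<forall>j<n. 0 \<le> \<mu> j \<and> \<mu> j \<le> \<delta>/2"
    and up: "\<forall>j<n. \<bar>g j\<bar> \<le> pi/3 + \<delta> - \<mu> j - \<mu> (Suc j mod n)"
    and lo: "\<forall>j<n. pi/3 - \<mu> j - \<mu> (Suc j mod n) \<le> \<bar>g j\<bar>"
    and sum: "(\<Sum>j<n. g j) = 2 * pi * k"
    and mixed: "\<exists>j<n. 0 \<le> g j" "\<exists>j<n. g j < 0"
  shows "pi/3 \<le> (real n - 1) * \<delta>"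
proof -
  have n0: "0 < n" using odd by (cases n) auto
  define s where "s j = (0 \<le> g j)" for j
  define dev where "dev = (\<Sum>j<n. if s j then \<bar>g j\<bar> - pi/3 else pi/3 - \<bar>g j\<bar>)"
  define K :: int where "K = 6 * k - 2 * int (card {j\<in>{..<n}. s j}) + int n"
  have dev_le: "dev \<le> (real n - 1) * \<delta>" "- dev \<le> (real n - 1) * \<delta>"
  proof -
    show "dev \<le> (real n - 1) * \<delta>"
      unfolding dev_def using mixed by (intro mixed_sign_deviation_le[OF n0 mu up lo]) (auto simp: s_def)
    have "- dev = (\<Sum>j<n. if \<not> s j then \<bar>g j\<bar> - pi/3 else pi/3 - \<bar>g j\<bar>)"
      unfolding dev_def by (simp add: sum_negf[symmetric]) (intro sum.cong, auto)
    also have "\<dots> \<le> (real n - 1) * \<delta>"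
      using mixed by (intro mixed_sign_deviation_le[OF n0 mu up lo]) (auto simp: s_def)
    finally show "- dev \<le> (real n - 1) * \<delta>" .
  qed
  have dev_eq: "dev = pi/3 * of_int K"
  proof -
    have "dev = (\<Sum>j<n. g j - pi/3 * (if s j then 1 else -1))"
      unfolding dev_def by (intro sum.cong) (auto simp: s_def)
    also have "\<dots> = (\<Sum>j<n. g j) - pi/3 * (\<Sum>j<n. if s j then 1 else -1)"
      by (simp add: sum_subtractf sum_distrib_left)
    also have "\<dots> = pi/3 * of_int K"
      unfolding sum sum_if_pm_one K_def by (simp add: algebra_simps)
    finally show ?thesis .
  qed
  have "odd K" using odd by (simp add: K_def)
  then have "K \<le> -1 \<or> 1 \<le> K" by presburger
  then show ?thesis
  proof
    assume "K \<le> -1"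
    then have "pi/3 * 1 \<le> pi/3 * (- of_int K)" by (intro mult_left_mono) auto
    then show ?thesis using dev_le dev_eq by linarith
  next
    assume "1 \<le> K"
    then have "pi/3 * 1 \<le> pi/3 * of_int K" by (intro mult_left_mono) auto
    then show ?thesis using dev_le dev_eq by linarith
  qed
qed

lemma odd_angle_sum_same_sign:
  fixes g :: "nat \<Rightarrow> real" and k :: int
  assumes odd: "odd n" and n3: "3 \<le> n" and d0: "0 \<le> \<delta>"
    and bnd: "\<forall>j<n. pi/3 - \<delta>L \<le> g j \<and> g j \<le> pi/3 + \<delta>"
    and sum: "(\<Sum>j<n. g j) = 2 * pi * k"
  shows "pi/3 \<le> (real n - 1) * \<delta> \<or> pi/3 \<le> real n * \<delta>L \<or> (n mod 6 = 5 \<and> pi/3 \<le> real n * \<delta>)"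
proof -
  define K :: int where "K = 6 * k - int n"
  have "2 * pi * k \<le> real n * (pi/3 + \<delta>)"
    using sum_mono[of "{..<n}" g "\<lambda>_. pi/3 + \<delta>"] bnd sum by simp
  then have up: "pi/3 * of_int K \<le> real n * \<delta>" by (simp add: K_def algebra_simps)
  have "real n * (pi/3 - \<delta>L) \<le> 2 * pi * k"
    using sum_mono[of "{..<n}" "\<lambda>_. pi/3 - \<delta>L" g] bnd sum by simp
  then have lo: "pi/3 * (- of_int K) \<le> real n * \<delta>L" by (simp add: K_def algebra_simps)
  have "K \<le> -1 \<or> (n mod 6 = 5 \<and> K = 1) \<or> K \<ge> 3"
    using odd unfolding K_def by presburger
  then show ?thesis
  proof (elim disjE conjE)
    assume "K \<le> -1"
    then have "pi/3 * 1 \<le> pi/3 * (- of_int K)" by (intro mult_left_mono) auto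
    then show ?thesis using lo by linarith
  next
    assume "n mod 6 = 5" "K = 1"
    then show ?thesis using up by simp
  next
    assume "K \<ge> 3"
    then have "pi/3 * 3 \<le> pi/3 * of_int K" by (intro mult_left_mono) auto
    then have "pi \<le> real n * \<delta>" using up by linarith
    moreover have "\<delta> * 3 \<le> \<delta> * (real n * 2)" using n3 d0 by (intro mult_left_mono) auto
    ultimately show ?thesis by (simp add: algebra_simps)
  qed
qed

lemma odd_angle_sum_alternatives:
  fixes \<mu> g :: "nat \<Rightarrow> real" and k :: int
  assumes odd: "odd n" and n3: "3 \<le> n" and d0: "0 \<le> \<delta>"
    and mu: "\<forall>j<n. 0 \<le> \<mu> j \<and> \<mu> j \<le> \<delta>/2"
    and up: "\<forall>j<n. \<bar>g j\<bar> \<le> pi/3 + \<delta> - \<mu> j - \<mu> (Suc j mod n)"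
    and lo: "\<forall>j<n. pi/3 - \<mu> j - \<mu> (Suc j mod n) \<le> \<bar>g j\<bar>"
    and loL: "\<forall>j<n. pi/3 - \<delta>L \<le> \<bar>g j\<bar>"
    and sum: "(\<Sum>j<n. g j) = 2 * pi * k"
  shows "pi/3 \<le> (real n - 1) * \<delta> \<or> pi/3 \<le> real n * \<delta>L \<or> (n mod 6 = 5 \<and> pi/3 \<le> real n * \<delta>)"
proof -
  have bnd: "pi/3 - \<delta>L \<le> \<bar>g j\<bar> \<and> \<bar>g j\<bar> \<le> pi/3 + \<delta>" if j: "j < n" for j
  proof -
    have "Suc j mod n < n" using j by simp
    then have "0 \<le> \<mu> j" "0 \<le> \<mu> (Suc j mod n)" using mu j by auto
    then show ?thesis using up[rule_format, OF j] loL[rule_format, OF j] by linarith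
  qed
  consider "\<exists>j<n. 0 \<le> g j" "\<exists>j<n. g j < 0" | "\<forall>j<n. 0 \<le> g j" | "\<forall>j<n. g j < 0"
    by force
  then show ?thesis
  proof cases
    case 1
    then show ?thesis using odd_angle_sum_mixed_signs[OF odd mu up lo sum] by simp
  next
    case 2
    then have "\<forall>j<n. pi/3 - \<delta>L \<le> g j \<and> g j \<le> pi/3 + \<delta>" using bnd by fastforce
    then show ?thesis by (rule odd_angle_sum_same_sign[OF odd n3 d0 _ sum])
  next
    case 3
    then have "\<forall>j<n. pi/3 - \<delta>L \<le> - g j \<and> - g j \<le> pi/3 + \<delta>" using bnd by fastforce
    moreover have "(\<Sum>j<n. - g j) = 2 * pi * of_int (- k)" using sum by (simp add: sum_negf)
    ultimately show ?thesis by (rule odd_angle_sum_same_sign[OF odd n3 d0])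
  qed
qed

section \<open>The critical radius for odd n\<close>

lemma sin_ge_cubic:
  fixes z :: real
  assumes "0 \<le> z"
  shows "z - z^3/6 \<le> sin z"
proof -
  have "(\<Sum>m<3. sin_coeff m * z ^ m) = z"
    by (simp add: eval_nat_numeral sin_coeff_def)
  then have "\<bar>sin z - z\<bar> \<le> inverse (fact 3) * \<bar>z\<bar> ^ 3"
    using Maclaurin_sin_bound[of z 3] by simp
  also have "inverse (fact 3) * \<bar>z\<bar> ^ 3 = z^3/6" using assms by (simp add: eval_nat_numeral)
  finally show ?thesis by linarith
qed

lemma four_sin_sin_eq:
  fixes X Y :: real
  shows "4 * sin (pi/6 - X) * sin (pi/6 + Y) = 2 * cos (X + Y) - 2 * cos (pi/3 + (Y - X))"
proof -
  have "sqrt 3 ^ 2 = 3" by simp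
  then show ?thesis
    apply (simp add: sin_diff sin_add cos_add cos_diff trig_special_values)
    using sin_cos_squared_add[of X] sin_cos_squared_add[of Y] \<open>sqrt 3 ^ 2 = 3\<close> by algebra
qed

lemma small_angle_estimate:
  fixes p z :: real
  assumes p: "0 < p" "p \<le> 1/18" and z: "0 \<le> z" "z \<le> 1/3" and pz: "pi/3 * p \<le> z^2"
  shows "sqrt 3 * sin (2 * p) + (1 - cos (2 * p)) \<le> 4 * sin z ^ 2"
proof -
  have "sin (2 * p) \<le> 2 * p" using p by (intro sin_x_le_x) auto
  moreover have "1 - cos (2 * p) \<le> 2 * p^2"
  proof -
    have "sin p ^ 2 \<le> p ^ 2"
      using abs_sin_x_le_abs_x[of p] by (metis abs_le_square_iff)
    then show ?thesis using cos_double_sin[of p] by simp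
  qed
  ultimately have "sqrt 3 * sin (2 * p) + (1 - cos (2 * p)) \<le> sqrt 3 * (2 * p) + 2 * p^2"
    by (intro add_mono mult_left_mono) auto
  also have "\<dots> = 2 * p * (sqrt 3 + p)" by (simp add: power2_eq_square algebra_simps)
  also have "\<dots> \<le> 2 * p * (7/4 + 1/18)"
  proof -
    have "sqrt 3 \<le> 7/4" by (rule real_le_lsqrt) (auto simp: power2_eq_square)
    then show ?thesis using p by (intro mult_left_mono) auto
  qed
  also have "\<dots> \<le> 4 * (pi/3 * p * (53/54)^2)" using pi_gt3 p by (simp add: power2_eq_square)
  also have "\<dots> \<le> 4 * sin z ^ 2"
  proof -
    have q: "53/54 \<le> 1 - z^2/6"
    proof -
      have "z^2 \<le> (1/3)^2" using z by (intro power_mono) auto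
      then show ?thesis by (simp add: power_divide)
    qed
    have "z * (53/54) \<le> z * (1 - z^2/6)" using q z by (intro mult_left_mono) auto
    also have "\<dots> \<le> sin z" using sin_ge_cubic[OF z(1)] by (simp add: algebra_simps power3_eq_cube power2_eq_square)
    finally have "(z * (53/54))^2 \<le> sin z ^ 2" using z by (intro power_mono) auto
    moreover have "pi/3 * p * (53/54)^2 \<le> (z * (53/54))^2"
      unfolding power_mult_distrib using pz by (intro mult_right_mono) auto
    ultimately show ?thesis by linarith
  qed
  finally show ?thesis .
qed

lemma sin_product_parameters:
  fixes n :: real
  assumes n3: "3 \<le> n"
  defines "p \<equiv> pi/(12 * n * (n-1))"
  shows "0 < p" "p \<le> 1/18" "(2 * n - 1) * p \<le> 1/3" "pi/3 * p \<le> ((2 * n - 1) * p)^2"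
proof -
  have n1: "0 < n - 1" "0 < n" using n3 by auto
  show p0: "0 < p" unfolding p_def using n1 by simp
  have "6 \<le> n * (n-1)" using n3 mult_mono[of 3 n 2 "n-1"] by simp
  then have "pi/(12 * n * (n-1)) \<le> 4/(12 * 6)"
    using pi_less_4 n1 by (intro frac_le) auto
  then show "p \<le> 1/18" by (simp add: p_def)
  have "2 * n - 1 \<le> 5/6 * (n * (n-1))"
    using mult_nonneg_nonneg[of "5 * n - 2" "n - 3"] n3 by (simp add: algebra_simps)
  have "(2 * n - 1) * p = pi * (2 * n - 1)/(12 * n * (n-1))" by (simp add: p_def)
  also have "\<dots> \<le> 4 * (5/6 * (n * (n-1)))/(12 * n * (n-1))"
    using \<open>2 * n - 1 \<le> _\<close> pi_less_4 n3 n1 by (intro divide_right_mono mult_mono) auto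
  also have "\<dots> = 5/18" using n1 by (simp add: field_simps)
  finally show "(2 * n - 1) * p \<le> 1/3" by simp
  have "4 * (n * (n-1)) \<le> (2 * n - 1)^2" by (simp add: power2_eq_square algebra_simps)
  have "pi/3 = pi * (4 * (n * (n-1))) / (12 * n * (n-1))" using n1 by (simp add: field_simps)
  also have "\<dots> \<le> pi * (2 * n - 1)^2 / (12 * n * (n-1))"
    using \<open>4 * (n * (n-1)) \<le> _\<close> n1 by (intro divide_right_mono mult_left_mono) auto
  also have "\<dots> = (2 * n - 1)^2 * p" by (simp add: p_def)
  finally have "pi/3 * p \<le> ((2 * n - 1)^2 * p) * p" using p0 by (intro mult_right_mono) auto
  then show "pi/3 * p \<le> ((2 * n - 1) * p)^2" by (simp add: power2_eq_square mult_ac)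
qed

lemma sin_product_le_quarter:
  fixes n :: real
  assumes n3: "3 \<le> n"
  shows "4 * sin (pi/6 - pi/(6 * n)) * sin (pi/6 * (n/(n-1))) \<le> 1"
proof -
  define X where "X = pi/(6 * n)"
  define Y where "Y = pi/(6 * (n-1))"
  define p where "p = pi/(12 * n * (n-1))"
  define z where "z = (2 * n - 1) * p"
  note par = sin_product_parameters[OF n3, folded p_def z_def]
  have n1: "0 < n - 1" "0 < n" using n3 by auto
  have Y: "pi/6 * (n/(n-1)) = pi/6 + Y" unfolding Y_def using n1 by (simp add: field_simps)
  have t: "Y - X = 2 * p" unfolding X_def Y_def p_def using n1 by (simp add: field_simps)
  have XY: "X + Y = 2 * z" unfolding z_def X_def Y_def p_def using n1 by (simp add: field_simps)
  have "sqrt 3 * sin (2 * p) + (1 - cos (2 * p)) \<le> 4 * sin z ^ 2"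
    using par n3 by (intro small_angle_estimate) (auto simp: z_def)
  moreover have "cos (X + Y) = 1 - 2 * sin z ^ 2" unfolding XY by (rule cos_double_sin)
  moreover have "cos (pi/3 + 2 * p) = cos (2 * p) / 2 - sqrt 3 / 2 * sin (2 * p)"
    by (simp add: cos_add trig_special_values)
  ultimately show ?thesis
    unfolding Y X_def[symmetric] four_sin_sin_eq t by linarith
qed

lemma two_sin_le_two_cos_of_budget:
  fixes m w :: real
  assumes m: "0 < m" and w: "0 \<le> w" and budget: "pi/3 \<le> m * (2 * pi/3 - 2 * w)"
  shows "2 * sin (pi/6 * ((m + 1) / m)) \<le> 2 * cos w"
proof -
  define t where "t = pi/3 - pi/(6 * m)"
  have "w \<le> t" using budget m by (simp add: t_def field_simps)
  moreover have "0 \<le> pi/(6 * m)" using m by simp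
  then have "t \<le> pi" unfolding t_def using pi_gt_zero by linarith
  ultimately have "cos t \<le> cos w" using w by (intro cos_monotone_0_pi_le) auto
  moreover have "pi/6 * ((m + 1) / m) = pi/2 - t" using m by (simp add: t_def field_simps)
  ultimately show ?thesis by (simp add: cos_sin_eq)
qed

lemma two_sin_le_of_min_angle:
  fixes n :: nat and R :: real
  assumes n: "3 \<le> n" and R1: "1 \<le> R"
    and budget: "pi/3 \<le> real n * (pi/3 - arccos (1 - 1/(2 * R^2)))"
  shows "2 * sin (pi/6 * (real n / (real n - 1))) \<le> R"
proof -
  define L where "L = arccos (1 - 1/(2 * R^2))"
  define t where "t = pi/6 - pi/(6 * real n)"
  have n1: "0 < real n" using n by simp
  have R2: "1 \<le> R^2" using R1 by (simp add: one_le_power)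
  have "0 < 1/(2 * R^2)" using R1 by simp
  moreover have "1/(2 * R^2) \<le> 1/2" using R2 by (intro divide_left_mono) auto
  ultimately have q: "0 < 1/(2 * R^2)" "1/(2 * R^2) \<le> 1/2" .
  have small: "0 \<le> pi/(6 * real n)" "pi/(6 * real n) < pi/6"
    using n by (simp, intro divide_strict_left_mono) auto
  have t0: "0 < t" using small unfolding t_def by linarith
  have "t \<le> pi/6" using small unfolding t_def by linarith
  then have t2: "2 * t \<le> pi" using pi_gt_zero by linarith
  have t: "0 < t" "2 * t \<le> pi" "t < pi" using t0 t2 by linarith+
  have "L \<le> 2 * t" using budget n1 by (simp add: L_def t_def field_simps)
  moreover have "0 \<le> L" unfolding L_def by (intro arccos_lbound; use q in linarith)
  ultimately have "cos (2 * t) \<le> cos L" using t by (intro cos_monotone_0_pi_le)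
  also have "cos L = 1 - 1/(2 * R^2)" unfolding L_def by (intro cos_arccos; use q in linarith)
  finally have "1/(2 * R^2) \<le> 2 * sin t ^ 2" by (simp add: cos_double_sin)
  then have "2 * R^2 * (1/(2 * R^2)) \<le> 2 * R^2 * (2 * sin t ^ 2)" by (intro mult_left_mono) auto
  then have "1 \<le> (2 * R * sin t)^2" using R1 by (simp add: power_mult_distrib)
  moreover have "0 < sin t" using t by (intro sin_gt_zero)
  ultimately have B: "1 \<le> 2 * R * sin t"
    using R1 by (intro power2_le_imp_le[of 1]) auto
  have "(2 * sin t) * (2 * sin (pi/6 * (real n / (real n - 1)))) \<le> 1"
    using sin_product_le_quarter[of "real n"] n by (simp add: t_def)
  also have "\<dots> \<le> (2 * sin t) * R" using B by (simp add: mult_ac)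
  finally show ?thesis using \<open>0 < sin t\<close> by (simp add: mult_le_cancel_left_pos)
qed

definition odd_prism_radius :: "nat \<Rightarrow> real" where
  "odd_prism_radius n = (if n mod 6 = 1 \<or> n mod 6 = 3 then 2 * sin (pi/6 * (real n / (real n - 1)))
                         else 2 * sin (pi/6 * ((real n + 1) / real n)))"

lemma odd_prism_radius_le_sqrt2:
  assumes "3 \<le> n"
  shows "odd_prism_radius n \<le> sqrt 2"
proof -
  have two_sin: "2 * sin x \<le> sqrt 2" if "0 \<le> x" "x \<le> pi/4" for x
  proof -
    have "sin x \<le> sin (pi/4)" using that by (intro sin_monotone_2pi_le) auto
    then show ?thesis by (simp add: sin_45)
  qed
  have "real n / (real n - 1) \<le> 3/2" "(real n + 1) / real n \<le> 3/2"
    using assms by (simp_all add: field_simps)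
  then have "pi/6 * (real n / (real n - 1)) \<le> pi/6 * (3/2)"
    "pi/6 * ((real n + 1) / real n) \<le> pi/6 * (3/2)"
    by (intro mult_left_mono; simp)+
  then show ?thesis
    unfolding odd_prism_radius_def using two_sin assms by simp
qed

lemma sin_pi_sixths_mono:
  assumes "3 \<le> n"
  shows "sin (pi/6 * ((real n + 1) / real n)) \<le> sin (pi/6 * (real n / (real n - 1)))"
proof -
  have "(real n + 1) / real n \<le> real n / (real n - 1)" "real n / (real n - 1) \<le> 3"
    using assms by (simp_all add: field_simps)
  then have "pi/6 * ((real n + 1) / real n) \<le> pi/6 * (real n / (real n - 1))"
    "pi/6 * (real n / (real n - 1)) \<le> pi/6 * 3"
    by (intro mult_left_mono; simp)+
  moreover have "0 \<le> pi/6 * ((real n + 1) / real n)" by simp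
  ultimately show ?thesis
    by (intro sin_monotone_2pi_le; use pi_gt_zero in linarith)
qed

section \<open>Polygons in an annulus\<close>

definition annulus_cycle :: "nat \<Rightarrow> real \<Rightarrow> (nat \<Rightarrow> complex) \<Rightarrow> bool" where
  "annulus_cycle n R x \<longleftrightarrow>
     (\<forall>j<n. 1 \<le> cmod (x j) \<and> cmod (x j) \<le> R \<and>
            1 \<le> cmod (x (Suc j mod n) - x j) \<and> cmod (x (Suc j mod n) - x j) \<le> R)"

lemma annulus_cycle_radius_ge_1:
  assumes "annulus_cycle n R x" "0 < n"
  shows "1 \<le> R"
  using assms(1)[unfolded annulus_cycle_def, rule_format, OF assms(2)] by auto

lemma annulus_cycle_angle_alternatives:
  fixes x :: "nat \<Rightarrow> complex" and R :: real
  assumes odd: "odd n" and n3: "3 \<le> n" and x: "annulus_cycle n R x" and R: "R^2 \<le> 2"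
  defines "\<delta> \<equiv> 2 * pi/3 - 2 * arccos (R/2)"
  shows "pi/3 \<le> (real n - 1) * \<delta> \<or> pi/3 \<le> real n * (pi/3 - arccos (1 - 1/(2 * R^2))) \<or>
         (n mod 6 = 5 \<and> pi/3 \<le> real n * \<delta>)"
proof -
  have n0: "0 < n" using n3 by simp
  have bnd: "1 \<le> cmod (x j)" "cmod (x j) \<le> R"
    "1 \<le> cmod (x (Suc j mod n) - x j)" "cmod (x (Suc j mod n) - x j) \<le> R" if "j < n" for j
    using x that by (auto simp: annulus_cycle_def)
  have R12: "1 \<le> R" "R \<le> 2"
    using annulus_cycle_radius_ge_1[OF x n0] le_2_of_sq_le_2[OF R] .
  define w where "w = arccos (R/2)"
  define u where "u j = arccos (cmod (x j) / 2)" for j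
  define \<mu> where "\<mu> j = pi/3 - u j" for j
  define g where "g j = Arg (x (Suc j mod n) / x j)" for j
  have u: "w \<le> u j \<and> u j \<le> pi/3" if "j < n" for j
    using bnd(1,2)[OF that] R12 arccos_half_bounds[of "cmod (x j)"]
    by (auto simp: u_def w_def intro: arccos_le_arccos)
  have mu: "\<forall>j<n. 0 \<le> \<mu> j \<and> \<mu> j \<le> \<delta>/2"
  proof (intro allI impI)
    fix j assume "j < n"
    then have "w \<le> u j" "u j \<le> pi/3" using u by auto
    then show "0 \<le> \<mu> j \<and> \<mu> j \<le> \<delta>/2" unfolding \<mu>_def \<delta>_def w_def[symmetric] by auto
  qed
  have angle: "u j + u (Suc j mod n) - pi/3 \<le> \<bar>g j\<bar>"
    "\<bar>g j\<bar> \<le> u j + u (Suc j mod n) + pi/3 - 2 * w"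
    "arccos (1 - 1/(2 * R^2)) \<le> \<bar>g j\<bar>" if j: "j < n" for j
  proof -
    have "Suc j mod n < n" using n0 by simp
    note ch = chord_angle_bounds[OF bnd(1,2)[OF j] bnd(1,2)[OF this] bnd(3,4)[OF j] R]
    show "u j + u (Suc j mod n) - pi/3 \<le> \<bar>g j\<bar>"
      "\<bar>g j\<bar> \<le> u j + u (Suc j mod n) + pi/3 - 2 * w"
      "arccos (1 - 1/(2 * R^2)) \<le> \<bar>g j\<bar>"
      using ch by (simp_all add: u_def w_def g_def)
  qed
  have "\<forall>j<n. x j \<noteq> 0"
  proof (intro allI impI)
    fix j assume "j < n"
    then show "x j \<noteq> 0" using bnd(1)[of j] by auto
  qed
  then obtain k :: int where "(\<Sum>j<n. g j) = 2 * pi * k"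
    unfolding g_def by (rule sum_Arg_cyclic_ratios[OF n0])
  moreover have "0 \<le> \<delta>" using R12 arccos_half_bounds[of R] by (simp add: \<delta>_def)
  moreover have "\<forall>j<n. \<bar>g j\<bar> \<le> pi/3 + \<delta> - \<mu> j - \<mu> (Suc j mod n)"
    and "\<forall>j<n. pi/3 - \<mu> j - \<mu> (Suc j mod n) \<le> \<bar>g j\<bar>"
    and "\<forall>j<n. pi/3 - (pi/3 - arccos (1 - 1/(2 * R^2))) \<le> \<bar>g j\<bar>"
    using angle unfolding \<mu>_def \<delta>_def w_def[symmetric] by (simp_all add: algebra_simps)
  ultimately show ?thesis by (intro odd_angle_sum_alternatives[OF odd n3 _ mu])
qed

lemma odd_prism_radius_le:
  fixes x :: "nat \<Rightarrow> complex" and R :: real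
  assumes odd: "odd n" and n3: "3 \<le> n" and x: "annulus_cycle n R x"
  shows "odd_prism_radius n \<le> R"
proof (cases "2 \<le> R^2")
  case True
  have "1 \<le> R" using annulus_cycle_radius_ge_1[OF x] n3 by simp
  then have "sqrt 2 \<le> R" using True real_sqrt_le_mono[OF True] by simp
  then show ?thesis using odd_prism_radius_le_sqrt2[OF n3] by simp
next
  case False
  then have R2: "R^2 \<le> 2" by simp
  have R1: "1 \<le> R" using annulus_cycle_radius_ge_1[OF x] n3 by simp
  define w where "w = arccos (R/2)"
  have w: "0 \<le> w" "R = 2 * cos w"
    using arccos_half_bounds[OF R1 le_2_of_sq_le_2[OF R2]] by (simp_all add: w_def)
  have "2 * sin (pi/6 * (real n / (real n - 1))) \<le> R \<or>
        (n mod 6 = 5 \<and> 2 * sin (pi/6 * ((real n + 1) / real n)) \<le> R)"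
    using annulus_cycle_angle_alternatives[OF odd n3 x R2, folded w_def]
  proof (elim disjE conjE)
    assume "pi/3 \<le> (real n - 1) * (2 * pi/3 - 2 * w)"
    then show ?thesis
      using two_sin_le_two_cos_of_budget[of "real n - 1" w] w n3 by simp
  next
    assume "pi/3 \<le> real n * (pi/3 - arccos (1 - 1/(2 * R^2)))"
    then show ?thesis using two_sin_le_of_min_angle[OF n3 R1] by simp
  next
    assume "n mod 6 = 5" "pi/3 \<le> real n * (2 * pi/3 - 2 * w)"
    then show ?thesis
      using two_sin_le_two_cos_of_budget[of "real n" w] w n3 by simp
  qed
  moreover have "n mod 6 = 1 \<or> n mod 6 = 3 \<or> n mod 6 = 5" using odd by presburger
  ultimately show ?thesis
    using sin_pi_sixths_mono[OF n3] unfolding odd_prism_radius_def by auto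
qed

section \<open>Flows on the prism\<close>

lemma orientation_one_direction:
  assumes ori: "orientation E D" and e: "{v, u} \<in> E" and uv: "u \<noteq> v"
  shows "(v, u) \<notin> D \<longleftrightarrow> (u, v) \<in> D"
proof -
  have uniq: "\<exists>!a. a \<in> D \<and> {fst a, snd a} = {v, u}" using ori e by (auto simp: orientation_def)
  then obtain a where a: "a \<in> D" "{fst a, snd a} = {v, u}" by blast
  then have "a = (v, u) \<or> a = (u, v)" by (cases a) (auto simp: doubleton_eq_iff)
  moreover have "\<not> ((v, u) \<in> D \<and> (u, v) \<in> D)"
  proof
    assume "(v, u) \<in> D \<and> (u, v) \<in> D"
    moreover have "{fst (u, v), snd (u, v)} = {v, u}" by (simp add: insert_commute)
    ultimately have "(v, u) = (u, v)" using uniq by (metis fst_conv snd_conv)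
    then show False using uv by simp
  qed
  ultimately show ?thesis using a(1) by auto
qed

definition edge_flow :: "('a \<times> 'a) set \<Rightarrow> ('a \<times> 'a \<Rightarrow> complex) \<Rightarrow> 'a \<Rightarrow> 'a \<Rightarrow> complex" where
  "edge_flow D \<phi> v u = (if (v, u) \<in> D then \<phi> (v, u) else - \<phi> (u, v))"

lemma edge_flow_antisym:
  assumes "orientation E D" "{v, u} \<in> E" "u \<noteq> v"
  shows "edge_flow D \<phi> u v = - edge_flow D \<phi> v u"
  using orientation_one_direction[OF assms] by (auto simp: edge_flow_def)

lemma edge_flow_norm_bounds:
  assumes "orientation E D" "{v, u} \<in> E" "u \<noteq> v"
    and "\<forall>a\<in>D. 1 \<le> cmod (\<phi> a) \<and> cmod (\<phi> a) \<le> r - 1"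
  shows "1 \<le> cmod (edge_flow D \<phi> v u) \<and> cmod (edge_flow D \<phi> v u) \<le> r - 1"
  using orientation_one_direction[OF assms(1-3)] assms(4) by (auto simp: edge_flow_def)

lemma outflow_minus_inflow:
  fixes \<phi> :: "'a \<times> 'a \<Rightarrow> complex"
  assumes ori: "orientation E D" and fin: "finite {u. {v, u} \<in> E}" and noloop: "{v} \<notin> E"
  shows "(\<Sum>a\<in>{a\<in>D. fst a = v}. \<phi> a) - (\<Sum>a\<in>{a\<in>D. snd a = v}. \<phi> a)
       = (\<Sum>u\<in>{u. {v, u} \<in> E}. edge_flow D \<phi> v u)"
proof -
  define N where "N = {u. {v, u} \<in> E}"
  have arcE: "{fst a, snd a} \<in> E" if "a \<in> D" for a using ori that by (auto simp: orientation_def)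
  have out: "{a\<in>D. fst a = v} = Pair v ` {u\<in>N. (v, u) \<in> D}"
  proof (rule set_eqI, rule iffI)
    fix a assume a: "a \<in> {a\<in>D. fst a = v}"
    then have "snd a \<in> {u\<in>N. (v, u) \<in> D}" "a = (v, snd a)"
      using arcE[of a] by (auto simp: N_def)
    then show "a \<in> Pair v ` {u\<in>N. (v, u) \<in> D}" by (rule rev_image_eqI)
  qed auto
  have inn: "{a\<in>D. snd a = v} = (\<lambda>u. (u, v)) ` {u\<in>N. (u, v) \<in> D}"
  proof (rule set_eqI, rule iffI)
    fix a assume a: "a \<in> {a\<in>D. snd a = v}"
    then have "{fst a, v} \<in> E" using arcE[of a] by simp
    then have "{v, fst a} \<in> E" by (simp add: insert_commute)
    then have "fst a \<in> {u\<in>N. (u, v) \<in> D}" "a = (fst a, v)" using a by (auto simp: N_def)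
    then show "a \<in> (\<lambda>u. (u, v)) ` {u\<in>N. (u, v) \<in> D}" by (rule rev_image_eqI)
  qed auto
  have "{u\<in>N. (u, v) \<in> D} = {u\<in>N. (v, u) \<notin> D}"
  proof -
    have "(v, u) \<notin> D \<longleftrightarrow> (u, v) \<in> D" if "u \<in> N" for u
    proof -
      have e: "{v, u} \<in> E" using that by (simp add: N_def)
      then have "u \<noteq> v" using noloop by auto
      then show ?thesis by (rule orientation_one_direction[OF ori e])
    qed
    then show ?thesis by blast
  qed
  moreover have "(\<Sum>u\<in>N. edge_flow D \<phi> v u)
      = (\<Sum>u\<in>{u\<in>N. (v, u) \<in> D}. \<phi> (v, u)) + (\<Sum>u\<in>{u\<in>N. (v, u) \<notin> D}. - \<phi> (u, v))"
    using fin unfolding edge_flow_def N_def by (simp add: sum.If_cases Int_def)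
  moreover have "(\<Sum>a\<in>{a\<in>D. fst a = v}. \<phi> a) = (\<Sum>u\<in>{u\<in>N. (v, u) \<in> D}. \<phi> (v, u))"
    unfolding out by (subst sum.reindex) (auto simp: inj_on_def)
  moreover have "(\<Sum>a\<in>{a\<in>D. snd a = v}. \<phi> a) = (\<Sum>u\<in>{u\<in>N. (u, v) \<in> D}. \<phi> (u, v))"
    unfolding inn by (subst sum.reindex) (auto simp: inj_on_def)
  ultimately show ?thesis by (simp add: N_def sum_negf)
qed

definition cyc_succ :: "nat \<Rightarrow> nat \<Rightarrow> nat" where "cyc_succ n j = (j + 1) mod n"
definition cyc_pred :: "nat \<Rightarrow> nat \<Rightarrow> nat" where "cyc_pred n j = (j + n - 1) mod n"

lemma cyc_succ_pred:
  assumes n: "3 \<le> n" and j: "j < n"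
  shows "cyc_succ n j < n" "cyc_pred n j < n"
    "cyc_succ n (cyc_pred n j) = j" "cyc_pred n (cyc_succ n j) = j"
    "cyc_succ n j \<noteq> j" "cyc_pred n j \<noteq> j" "cyc_succ n j \<noteq> cyc_pred n j"
    "cyc_succ n (cyc_succ n j) \<noteq> j"
proof -
  show "cyc_succ n j < n" "cyc_pred n j < n" using n by (auto simp: cyc_succ_def cyc_pred_def)
  consider (mid) "j + 1 < n" "0 < j" | (last) "j + 1 = n" | (first) "j = 0" using j n by linarith
  then have "cyc_succ n (cyc_pred n j) = j \<and> cyc_pred n (cyc_succ n j) = j \<and> cyc_succ n j \<noteq> j \<and>
      cyc_pred n j \<noteq> j \<and> cyc_succ n j \<noteq> cyc_pred n j \<and> cyc_succ n (cyc_succ n j) \<noteq> j"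
  proof cases
    case mid
    have "(j + n - 1) mod n = j - 1"
      using mid le_mod_geq[of n "j + n - 1"] by simp
    moreover have "(j + 1 + 1) mod n \<noteq> j"
    proof (cases "j + 2 < n")
      case False
      then have "j + 2 = n" using mid by simp
      then show ?thesis using mid by simp
    qed simp
    ultimately show ?thesis using mid j by (auto simp: cyc_succ_def cyc_pred_def)
  next
    case last
    have "(j + n - 1) mod n = j - 1"
      using last n le_mod_geq[of n "j + n - 1"] by simp
    then show ?thesis using last n by (auto simp: cyc_succ_def cyc_pred_def)
  next
    case first
    have "(n - 1 + 1) mod n = 0" "(1 + 1) mod n \<noteq> 0" using n by simp_all
    then show ?thesis using first n by (auto simp: cyc_succ_def cyc_pred_def)
  qed
  then show "cyc_succ n (cyc_pred n j) = j" "cyc_pred n (cyc_succ n j) = j" "cyc_succ n j \<noteq> j"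
    "cyc_pred n j \<noteq> j" "cyc_succ n j \<noteq> cyc_pred n j" "cyc_succ n (cyc_succ n j) \<noteq> j" by auto
qed

lemma prism_edge_iff:
  "{p, q} \<in> prism_edges n \<longleftrightarrow>
     (\<exists>b i. i < n \<and> (p = (b, i) \<and> q = (b, cyc_succ n i) \<or> q = (b, i) \<and> p = (b, cyc_succ n i))) \<or>
     (\<exists>i<n. p = (False, i) \<and> q = (True, i) \<or> p = (True, i) \<and> q = (False, i))"
  unfolding prism_edges_def cyc_succ_def by (auto simp: doubleton_eq_iff)

lemma prism_neighbours:
  assumes n: "3 \<le> n" and j: "j < n"
  shows "{u. {(b, j), u} \<in> prism_edges n} = {(b, cyc_succ n j), (b, cyc_pred n j), (\<not> b, j)}"
proof (rule set_eqI, rule iffI)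
  fix u assume "u \<in> {u. {(b, j), u} \<in> prism_edges n}"
  then consider (succ) b' i where "i < n" "(b, j) = (b', i)" "u = (b', cyc_succ n i)"
    | (pred) b' i where "i < n" "u = (b', i)" "(b, j) = (b', cyc_succ n i)"
    | (spoke) i where "i < n" "(b, j) = (False, i) \<and> u = (True, i) \<or> (b, j) = (True, i) \<and> u = (False, i)"
    unfolding mem_Collect_eq prism_edge_iff by blast
  then show "u \<in> {(b, cyc_succ n j), (b, cyc_pred n j), (\<not> b, j)}"
  proof cases
    case pred
    then have "i = cyc_pred n j" using cyc_succ_pred[OF n pred(1)] by auto
    then show ?thesis using pred by auto
  qed auto
next
  fix u assume u: "u \<in> {(b, cyc_succ n j), (b, cyc_pred n j), (\<not> b, j)}"
  have "{(b, j), (b, cyc_succ n j)} \<in> prism_edges n" unfolding prism_edge_iff using j by blast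
  moreover have "{(b, j), (\<not> b, j)} \<in> prism_edges n" unfolding prism_edge_iff using j by (cases b) blast+
  moreover have "{(b, j), (b, cyc_pred n j)} \<in> prism_edges n"
    unfolding prism_edge_iff using cyc_succ_pred[OF n j]
    by (intro disjI1 exI[of _ b] exI[of _ "cyc_pred n j"]) auto
  ultimately show "u \<in> {u. {(b, j), u} \<in> prism_edges n}" using u by auto
qed

lemma prism_no_loop:
  assumes "3 \<le> n"
  shows "{v} \<notin> prism_edges n"
proof
  assume "{v} \<in> prism_edges n"
  then have "{v, v} \<in> prism_edges n" by simp
  then obtain b i where "i < n" "v = (b, i)" "v = (b, cyc_succ n i)"
    unfolding prism_edge_iff by blast
  then show False using cyc_succ_pred(5)[OF assms] by simp
qed

lemma prism_flow_imp_annulus_cycle: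
  assumes n: "3 \<le> n" and fl: "complex_nz_flow (prism_vertices n) (prism_edges n) r"
  shows "\<exists>x. annulus_cycle n (r - 1) x"
proof -
  obtain D and \<phi> :: "(bool \<times> nat) \<times> (bool \<times> nat) \<Rightarrow> complex" where
    ori: "orientation (prism_edges n) D" and b: "\<forall>a\<in>D. 1 \<le> cmod (\<phi> a) \<and> cmod (\<phi> a) \<le> r - 1"
    and kir: "\<forall>v\<in>prism_vertices n. (\<Sum>a\<in>{a\<in>D. snd a = v}. \<phi> a) = (\<Sum>a\<in>{a\<in>D. fst a = v}. \<phi> a)"
    using fl unfolding complex_nz_flow_def by blast
  define F where "F = edge_flow D \<phi>"
  have rim: "{(False, j), (False, cyc_succ n j)} \<in> prism_edges n"
    and spoke: "{(False, j), (True, j)} \<in> prism_edges n" if "j < n" for j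
    unfolding prism_edge_iff using that by blast+
  have kir_a: "F (False, j) (False, cyc_succ n j) + F (False, j) (False, cyc_pred n j)
      + F (False, j) (True, j) = 0" if j: "j < n" for j
  proof -
    have "0 = (\<Sum>a\<in>{a\<in>D. fst a = (False, j)}. \<phi> a) - (\<Sum>a\<in>{a\<in>D. snd a = (False, j)}. \<phi> a)"
      using kir j by (simp add: prism_vertices_def)
    also have "\<dots> = (\<Sum>u\<in>{u. {(False, j), u} \<in> prism_edges n}. F (False, j) u)"
      unfolding F_def using prism_neighbours[OF n j] prism_no_loop[OF n]
      by (intro outflow_minus_inflow[OF ori]) simp_all
    also have "\<dots> = F (False, j) (False, cyc_succ n j) + F (False, j) (False, cyc_pred n j)
        + F (False, j) (True, j)"
      unfolding prism_neighbours[OF n j] using cyc_succ_pred[OF n j] by (simp add: add.assoc)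
    finally show ?thesis by simp
  qed
  define x where "x j = F (False, j) (False, cyc_succ n j)" for j
  have "annulus_cycle n (r - 1) x"
    unfolding annulus_cycle_def
  proof (intro allI impI)
    fix j assume j: "j < n"
    define j' where "j' = cyc_succ n j"
    have j': "j' < n" "cyc_pred n j' = j" "Suc j mod n = j'"
      using cyc_succ_pred[OF n j] by (auto simp: j'_def cyc_succ_def)
    have ne: "(False, cyc_succ n j) \<noteq> (False, j)" using cyc_succ_pred[OF n j] by simp
    have "F (False, j') (True, j') = x j - x j'"
      using kir_a[OF j'(1)] edge_flow_antisym[OF ori rim[OF j] ne] j'(2)
      by (simp add: F_def x_def j'_def algebra_simps)
    moreover have "1 \<le> cmod (F (False, j') (True, j')) \<and> cmod (F (False, j') (True, j')) \<le> r - 1"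
      unfolding F_def by (rule edge_flow_norm_bounds[OF ori spoke[OF j'(1)] _ b]) simp
    moreover have "1 \<le> cmod (x j) \<and> cmod (x j) \<le> r - 1"
      unfolding x_def F_def by (rule edge_flow_norm_bounds[OF ori rim[OF j] ne b])
    ultimately show "1 \<le> cmod (x j) \<and> cmod (x j) \<le> r - 1 \<and>
        1 \<le> cmod (x (Suc j mod n) - x j) \<and> cmod (x (Suc j mod n) - x j) \<le> r - 1"
      using j'(3) by (simp add: norm_minus_commute)
  qed
  then show ?thesis by auto
qed

definition prism_arcs :: "nat \<Rightarrow> ((bool \<times> nat) \<times> (bool \<times> nat)) set" where
  "prism_arcs n = {(p, q). {p, q} \<in> prism_edges n \<and>
     (fst p = fst q \<and> snd q = cyc_succ n (snd p) \<or> \<not> fst p \<and> fst q \<and> snd p = snd q)}"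

lemma orientation_prism_arcs:
  assumes n: "3 \<le> n"
  shows "orientation (prism_edges n) (prism_arcs n)"
  unfolding orientation_def
proof (intro conjI ballI)
  fix a assume "a \<in> prism_arcs n"
  then show "{fst a, snd a} \<in> prism_edges n" by (auto simp: prism_arcs_def)
next
  fix e assume e: "e \<in> prism_edges n"
  then consider (rim) b i where "i < n" "e = {(b, i), (b, cyc_succ n i)}"
    | (spoke) i where "i < n" "e = {(False, i), (True, i)}"
    unfolding prism_edges_def cyc_succ_def by blast
  then show "\<exists>!a. a \<in> prism_arcs n \<and> {fst a, snd a} = e"
  proof cases
    case rim
    have "cyc_succ n (cyc_succ n i) \<noteq> i" using cyc_succ_pred[OF n rim(1)] by simp
    then show ?thesis using e rim
      by (intro ex1I[of _ "((b, i), (b, cyc_succ n i))"])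
         (auto simp: prism_arcs_def doubleton_eq_iff)
  next
    case spoke
    then show ?thesis using e
      by (intro ex1I[of _ "((False, i), (True, i))"]) (auto simp: prism_arcs_def doubleton_eq_iff)
  qed
qed

definition prism_flow :: "nat \<Rightarrow> (nat \<Rightarrow> complex) \<Rightarrow> (bool \<times> nat) \<times> (bool \<times> nat) \<Rightarrow> complex" where
  "prism_flow n x a = (if fst (fst a) = fst (snd a) then (if fst (fst a) then - x (snd (fst a)) else x (snd (fst a)))
                       else x (cyc_pred n (snd (fst a))) - x (snd (fst a)))"

lemma prism_flow_kirchhoff:
  assumes n: "3 \<le> n" and v: "v \<in> prism_vertices n"
  shows "(\<Sum>a\<in>{a\<in>prism_arcs n. snd a = v}. prism_flow n x a)
       = (\<Sum>a\<in>{a\<in>prism_arcs n. fst a = v}. prism_flow n x a)"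
proof -
  obtain b j where v: "v = (b, j)" and j: "j < n" using v by (auto simp: prism_vertices_def)
  note P = cyc_succ_pred[OF n j]
  define f where "f = edge_flow (prism_arcs n) (prism_flow n x) v"
  have E: "{(b, j), (b, cyc_succ n j)} \<in> prism_edges n" "{(False, j), (True, j)} \<in> prism_edges n"
    unfolding prism_edge_iff using j by blast+
  have "f (b, cyc_succ n j) = (if b then - x j else x j)"
    using E by (simp add: f_def v edge_flow_def prism_arcs_def prism_flow_def)
  moreover have "f (b, cyc_pred n j) = - (if b then - x (cyc_pred n j) else x (cyc_pred n j))"
    using P by (simp add: f_def v edge_flow_def prism_arcs_def prism_flow_def)
  moreover have "f (\<not> b, j) = (if b then - (x (cyc_pred n j) - x j) else x (cyc_pred n j) - x j)"
    using E by (cases b) (simp_all add: f_def v edge_flow_def prism_arcs_def prism_flow_def insert_commute)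
  ultimately have "(\<Sum>u\<in>{(b, cyc_succ n j), (b, cyc_pred n j), (\<not> b, j)}. f u) = 0"
    using P by (cases b) simp_all
  moreover have "(\<Sum>a\<in>{a\<in>prism_arcs n. fst a = v}. prism_flow n x a)
      - (\<Sum>a\<in>{a\<in>prism_arcs n. snd a = v}. prism_flow n x a)
      = (\<Sum>u\<in>{(b, cyc_succ n j), (b, cyc_pred n j), (\<not> b, j)}. f u)"
    unfolding f_def v prism_neighbours[OF n j, symmetric]
    using prism_no_loop[OF n] prism_neighbours[OF n j]
    by (intro outflow_minus_inflow[OF orientation_prism_arcs[OF n]]) simp_all
  ultimately show ?thesis by simp
qed

lemma annulus_cycle_imp_prism_flow:
  assumes n: "3 \<le> n" and x: "annulus_cycle n R x"
  shows "complex_nz_flow (prism_vertices n) (prism_edges n) (R + 1)"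
proof -
  have x1: "1 \<le> cmod (x i) \<and> cmod (x i) \<le> R" if "i < n" for i
    using x that by (simp add: annulus_cycle_def)
  have x2: "1 \<le> cmod (x (cyc_pred n i) - x i) \<and> cmod (x (cyc_pred n i) - x i) \<le> R" if "i < n" for i
  proof -
    have "Suc (cyc_pred n i) mod n = i" "cyc_pred n i < n"
      using cyc_succ_pred[OF n that] by (simp_all add: cyc_succ_def)
    then show ?thesis using x by (force simp: annulus_cycle_def norm_minus_commute)
  qed
  have "1 \<le> cmod (prism_flow n x a) \<and> cmod (prism_flow n x a) \<le> R + 1 - 1"
    if a: "a \<in> prism_arcs n" for a
  proof -
    obtain p q where pq: "a = (p, q)" "{p, q} \<in> prism_edges n" using a by (auto simp: prism_arcs_def)
    then have i: "snd p < n" using n unfolding prism_edges_def by (auto simp: doubleton_eq_iff)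
    show ?thesis using a pq x1[OF i] x2[OF i] by (auto simp: prism_arcs_def prism_flow_def)
  qed
  then show ?thesis
    unfolding complex_nz_flow_def using orientation_prism_arcs[OF n] prism_flow_kirchhoff[OF n]
    by blast
qed

lemma prism_flow_iff_annulus_cycle:
  assumes "3 \<le> n"
  shows "complex_nz_flow (prism_vertices n) (prism_edges n) r \<longleftrightarrow> (\<exists>x. annulus_cycle n (r - 1) x)"
  using prism_flow_imp_annulus_cycle[OF assms] annulus_cycle_imp_prism_flow[OF assms, of "r - 1"]
  by auto

section \<open>Optimal polygons\<close>

lemma norm_cis_diff: "cmod (cis a - cis b) = 2 * \<bar>sin ((a - b)/2)\<bar>"
proof -
  have "cmod (cis a - cis b)^2 = (cos a - cos b)^2 + (sin a - sin b)^2"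
    by (simp add: cmod_power2)
  also have "\<dots> = 2 - 2 * cos (a - b)"
    using sin_cos_squared_add[of a] sin_cos_squared_add[of b]
    by (simp add: cos_diff power2_eq_square algebra_simps)
  also have "\<dots> = (2 * \<bar>sin ((a - b)/2)\<bar>)^2"
  proof -
    have e: "2 * ((a - b)/2) = a - b" by simp
    show ?thesis using cos_double_sin[of "(a - b)/2"] unfolding e by (simp add: power_mult_distrib)
  qed
  finally show ?thesis
    by (rule power2_eq_imp_eq) auto
qed

lemma cis_add_2pi_multiple: "cis (2 * pi * real m + a) = cis a"
  by (simp add: cis_mult[symmetric])

lemma norm_1_minus_cis_pi_third: "cmod (1 - cis (pi/3)) = 1"
  using norm_cis_diff[of 0 "pi/3"] by (simp add: sin_30)

lemma two_sin_ge_1: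
  assumes "pi/6 \<le> t" "t \<le> pi/2"
  shows "1 \<le> 2 * sin t"
proof -
  have "sin (pi/6) \<le> sin t" using assms by (intro sin_le_sin_between) auto
  then show ?thesis by (simp add: sin_30)
qed

lemma annulus_cycle_even:
  assumes "even n"
  shows "annulus_cycle n 1 (\<lambda>j. if even j then 1 else cis (pi/3))"
  unfolding annulus_cycle_def
proof (intro allI impI)
  fix j assume j: "j < n"
  have "cmod (cis (pi/3) - 1) = 1" using norm_1_minus_cis_pi_third by (simp add: norm_minus_commute)
  moreover have "Suc j mod n = Suc j \<or> (Suc j mod n = 0 \<and> odd j)"
  proof (cases "Suc j < n")
    case False
    then have "Suc j = n" using j by simp
    then show ?thesis using assms by auto
  qed simp
  ultimately show "1 \<le> cmod (if even j then 1 else cis (pi/3)) \<and> cmod (if even j then 1 else cis (pi/3)) \<le> 1 \<and>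
      1 \<le> cmod ((if even (Suc j mod n) then 1 else cis (pi/3)) - (if even j then 1 else cis (pi/3))) \<and>
      cmod ((if even (Suc j mod n) then 1 else cis (pi/3)) - (if even j then 1 else cis (pi/3))) \<le> 1"
    using norm_1_minus_cis_pi_third by auto
qed

lemma annulus_cycle_rotation:
  assumes n: "0 < n" and \<theta>: "0 < \<theta>" "\<theta> < 2 * pi" "1 \<le> 2 * sin (\<theta>/2)"
    and closing: "1 \<le> cmod (1 - cis (real (n - 1) * \<theta>))" "cmod (1 - cis (real (n - 1) * \<theta>)) \<le> 2 * sin (\<theta>/2)"
  shows "annulus_cycle n (2 * sin (\<theta>/2)) (\<lambda>j. cis (real j * \<theta>))"
  unfolding annulus_cycle_def
proof (intro allI impI)
  fix j assume j: "j < n"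
  have "0 < sin (\<theta>/2)" using \<theta> by (intro sin_gt_zero) auto
  then have step: "cmod (cis (real (Suc j) * \<theta>) - cis (real j * \<theta>)) = 2 * sin (\<theta>/2)"
    using norm_cis_diff[of "real (Suc j) * \<theta>" "real j * \<theta>"] by (simp add: algebra_simps)
  have "cmod (cis (real (Suc j mod n) * \<theta>) - cis (real j * \<theta>)) \<in> {1 .. 2 * sin (\<theta>/2)}"
  proof (cases "Suc j < n")
    case True
    then show ?thesis using step \<theta> by simp
  next
    case False
    then have "Suc j = n" using j by simp
    then have "j = n - 1" "Suc j mod n = 0" by auto
    then show ?thesis using closing by simp
  qed
  then show "1 \<le> cmod (cis (real j * \<theta>)) \<and> cmod (cis (real j * \<theta>)) \<le> 2 * sin (\<theta>/2) \<and>
      1 \<le> cmod (cis (real (Suc j mod n) * \<theta>) - cis (real j * \<theta>)) \<and>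
      cmod (cis (real (Suc j mod n) * \<theta>) - cis (real j * \<theta>)) \<le> 2 * sin (\<theta>/2)"
    using \<theta> by simp
qed

lemma annulus_cycle_mod6_5:
  assumes n: "n mod 6 = 5"
  shows "\<exists>x. annulus_cycle n (2 * sin (pi/6 * ((real n + 1) / real n))) x"
proof -
  define \<theta> where "\<theta> = pi/3 * ((real n + 1) / real n)"
  obtain m where m: "n = 6 * m + 5" using n by (metis div_mod_decomp mult.commute)
  have half: "\<theta>/2 = pi/6 * ((real n + 1) / real n)" by (simp add: \<theta>_def)
  have t: "pi/6 \<le> \<theta>/2" "\<theta>/2 \<le> pi/2" unfolding half using m by (simp_all add: field_simps)
  then have R: "1 \<le> 2 * sin (\<theta>/2)" by (rule two_sin_ge_1)
  have \<theta>: "0 < \<theta>" "\<theta> < 2 * pi" by (use t pi_gt_zero in linarith)+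
  have "0 < sin (\<theta>/2)" using \<theta> by (intro sin_gt_zero) auto
  moreover have "real (n - 1) * \<theta> = 2 * pi * real (m + 1) + - \<theta>"
    unfolding \<theta>_def using m by (simp add: field_simps)
  ultimately have "cmod (1 - cis (real (n - 1) * \<theta>)) = 2 * sin (\<theta>/2)"
    using norm_cis_diff[of 0 "- \<theta>"] by (simp only: cis_add_2pi_multiple) simp
  then have "annulus_cycle n (2 * sin (\<theta>/2)) (\<lambda>j. cis (real j * \<theta>))"
    using \<theta> R m by (intro annulus_cycle_rotation) auto
  then show ?thesis unfolding half by blast
qed

lemma annulus_cycle_mod6_1:
  assumes n: "n mod 6 = 1" "3 \<le> n"
  shows "\<exists>x. annulus_cycle n (2 * sin (pi/6 * (real n / (real n - 1)))) x"
proof -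
  define \<theta> where "\<theta> = pi/3 * (real n / (real n - 1))"
  obtain m where m: "n = 6 * m + 1" using n by (metis div_mod_decomp mult.commute)
  have half: "\<theta>/2 = pi/6 * (real n / (real n - 1))" by (simp add: \<theta>_def)
  have t: "pi/6 \<le> \<theta>/2" "\<theta>/2 \<le> pi/2" unfolding half using n by (simp_all add: field_simps)
  then have R: "1 \<le> 2 * sin (\<theta>/2)" by (rule two_sin_ge_1)
  have \<theta>: "0 < \<theta>" "\<theta> < 2 * pi" by (use t pi_gt_zero in linarith)+
  have "real (n - 1) * \<theta> = 2 * pi * real m + pi/3"
    unfolding \<theta>_def using m n by (simp add: of_nat_diff field_simps)
  then have "cmod (1 - cis (real (n - 1) * \<theta>)) = 1"
    by (simp only: cis_add_2pi_multiple norm_1_minus_cis_pi_third)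
  then have "annulus_cycle n (2 * sin (\<theta>/2)) (\<lambda>j. cis (real j * \<theta>))"
    using \<theta> R n by (intro annulus_cycle_rotation) auto
  then show ?thesis unfolding half by blast
qed

text \<open>For \<open>n \<equiv> 3 (mod 6)\<close> the star polygon with turning angle \<open>\<theta>\<close> would end at
  \<open>cis ((n - 1) \<theta>) = -1\<close>, at distance \<open>2 > R\<close> from \<open>x 0 = 1\<close>. Its last vertex is replaced by
  \<open>1 - cis (-\<theta>)\<close>, which has modulus \<open>R = 2 sin (\<theta>/2)\<close> and distance 1 from both neighbours
  \<open>x 0 = 1\<close> and \<open>x (n - 2) = - cis (-\<theta>)\<close>.\<close>

lemma annulus_cycle_mod6_3:
  assumes n: "n mod 6 = 3" "3 \<le> n"
  shows "\<exists>x. annulus_cycle n (2 * sin (pi/6 * (real n / (real n - 1)))) x"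
proof -
  define \<theta> where "\<theta> = pi/3 * (real n / (real n - 1))"
  define R where "R = 2 * sin (\<theta>/2)"
  obtain m where m: "n = 6 * m + 3" using n by (metis div_mod_decomp mult.commute)
  have half: "\<theta>/2 = pi/6 * (real n / (real n - 1))" by (simp add: \<theta>_def)
  have t: "pi/6 \<le> \<theta>/2" "\<theta>/2 \<le> pi/2" unfolding half using n by (simp_all add: field_simps)
  then have R1: "1 \<le> R" unfolding R_def by (rule two_sin_ge_1)
  have \<theta>: "0 < \<theta>" "\<theta> < 2 * pi" by (use t pi_gt_zero in linarith)+
  have s: "0 < sin (\<theta>/2)" using \<theta> by (intro sin_gt_zero) auto
  then have step: "cmod (cis (real (Suc j) * \<theta>) - cis (real j * \<theta>)) = R" for j
    using norm_cis_diff[of "real (Suc j) * \<theta>" "real j * \<theta>"] by (simp add: R_def algebra_simps)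
  have moved: "cmod (1 - cis (- \<theta>)) = R"
    using norm_cis_diff[of 0 "- \<theta>"] s by (simp add: R_def)
  have "real (n - 2) * \<theta> = 2 * pi * real m + (pi - \<theta>)"
    unfolding \<theta>_def using m by (simp add: of_nat_diff field_simps)
  then have penult: "cis (real (n - 2) * \<theta>) = - cis (- \<theta>)"
    by (simp only: cis_add_2pi_multiple) (simp add: complex_eq_iff)
  define x where "x j = (if j = n - 1 then 1 - cis (- \<theta>) else cis (real j * \<theta>))" for j
  have "annulus_cycle n R x"
    unfolding annulus_cycle_def
  proof (intro allI impI conjI)
    fix j assume j: "j < n"
    show "1 \<le> cmod (x j)" "cmod (x j) \<le> R" using moved R1 by (simp_all add: x_def)
    consider "Suc j < n - 1" | "j = n - 2" | "j = n - 1" using j by linarith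
    then have "cmod (x (Suc j mod n) - x j) \<in> {1 .. R}"
    proof cases
      case 1
      then show ?thesis using step[of j] R1 by (simp add: x_def)
    next
      case 2
      then have "Suc j mod n = n - 1" "j \<noteq> n - 1" using n by auto
      then have "x j = - cis (- \<theta>)" "x (Suc j mod n) = 1 - cis (- \<theta>)"
        using 2 penult by (simp_all add: x_def)
      then show ?thesis using R1 by simp
    next
      case 3
      then have "x j = 1 - cis (- \<theta>)" "x (Suc j mod n) = 1" using n by (simp_all add: x_def)
      then show ?thesis using R1 by simp
    qed
    then show "1 \<le> cmod (x (Suc j mod n) - x j)" "cmod (x (Suc j mod n) - x j) \<le> R" by simp_all
  qed
  then show ?thesis unfolding R_def half by blast
qed

lemma annulus_cycle_odd:
  assumes "odd n" "3 \<le> n"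
  shows "\<exists>x. annulus_cycle n (odd_prism_radius n) x"
proof -
  have "n mod 6 = 1 \<or> n mod 6 = 3 \<or> n mod 6 = 5" using assms by presburger
  then show ?thesis
    using annulus_cycle_mod6_1[OF _ assms(2)] annulus_cycle_mod6_3[OF _ assms(2)] annulus_cycle_mod6_5
    unfolding odd_prism_radius_def by auto
qed

theorem corollary3:
  fixes n :: nat
  assumes "n \<ge> 3"
  shows "complex_flow_number (prism_vertices n) (prism_edges n) =
    (if even n then 2
     else if n mod 6 = 1 \<or> n mod 6 = 3 then 1 + 2 * sin (pi / 6 * (real n / (real n - 1)))
     else 1 + 2 * sin (pi / 6 * ((real n + 1) / real n)))"
proof -
  let ?S = "{r. r \<ge> 2 \<and> complex_nz_flow (prism_vertices n) (prism_edges n) r}"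
  note flow = prism_flow_iff_annulus_cycle[OF assms]
  show ?thesis
  proof (cases "even n")
    case True
    have "2 \<in> ?S" using flow[of 2] annulus_cycle_even[OF True] by auto
    then have "Inf ?S = 2" by (intro cInf_eq_minimum) auto
    with True show ?thesis by (simp add: complex_flow_number_def)
  next
    case False
    obtain x where x: "annulus_cycle n (odd_prism_radius n) x"
      using annulus_cycle_odd[OF False assms] by blast
    have "1 \<le> odd_prism_radius n" using annulus_cycle_radius_ge_1[OF x] assms by simp
    then have "1 + odd_prism_radius n \<in> ?S" using flow[of "1 + odd_prism_radius n"] x by auto
    moreover have "1 + odd_prism_radius n \<le> r" if "r \<in> ?S" for r
      using that flow[of r] odd_prism_radius_le[OF False assms] by force
    ultimately have "Inf ?S = 1 + odd_prism_radius n" by (intro cInf_eq_minimum) auto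
    with False show ?thesis by (simp add: complex_flow_number_def odd_prism_radius_def)
  qed
qed

end
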